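(* Let $h:[0,\infty)\to[0,\infty)$ be concave and non-decreasing, let $u>l\ge0$, and let $(a_k)_{k=1}^n$, $(b_k)_{k=1}^n$ be sequences of non-negative reals with $a_k\le b_k$ for each $k$. Then $$h(a_1+h(a_2+\dots h(a_n+u)))-h(a_1+h(a_2+\dots h(a_n+l)))\ \ge\ h(b_1+h(b_2+\dots h(b_n+u)))-h(b_1+h(b_2+\dots h(b_n+l))).$$
   Context: Throughout the paper all numbers are taken to be non-negative reals. *)

theory Defs
  imports "HOL-Analysis.Analysis"
begin

text \<open>nest h a n j x = h(a_{n-j+1} + h(a_{n-j+2} + ... h(a_n + x))) (j layers, innermost a_n).
  Hence nest h a n n x = h(a_1 + h(a_2 + ... h(a_n + x))).\<close>
fun nest :: "(real \<Rightarrow> real) \<Rightarrow> (nat \<Rightarrow> real) \<Rightarrow> nat \<Rightarrow> nat \<Rightarrow> real \<Rightarrow> real" where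
  "nest h a n 0 x = x"
| "nest h a n (Suc j) x = h (a (n - j) + nest h a n j x)"

end

theory Submission
  imports Defs
begin

text \<open>The increments of a concave non-decreasing function shrink when the base point moves
  right and grow with the step size. Along the nesting this propagates inductively: with larger
  offsets b_k the inner arguments are larger, while the inner increment for b is at most the
  one for a, so each further layer of h keeps the increment for b below the one for a.\<close>

lemma concave_on_increment_antimono:
  fixes h :: "real \<Rightarrow> real"
  assumes concave: "concave_on {0..} h" and "0 \<le> p" "p \<le> r" "0 \<le> d"
  shows "h (r + d) - h r \<le> h (p + d) - h p"
proof (cases "d = 0")
  case False
  then have pos: "r + d - p > 0" using assms by auto
  define t where "t = d / (r + d - p)"
  have t: "0 \<le> t" "t \<le> 1" "t * (r + d - p) = d"
    using pos assms by (auto simp: t_def field_simps)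
  \<comment> \<open>Both p + d and r are convex combinations of p and r + d, with swapped weights.\<close>
  have "(1 - t) *\<^sub>R p + t *\<^sub>R (r + d) = p + d" "(1 - (1 - t)) *\<^sub>R p + (1 - t) *\<^sub>R (r + d) = r"
    using t(3) by (simp_all add: algebra_simps)
  then have "(1 - t) * h p + t * h (r + d) \<le> h (p + d)"
    and "(1 - (1 - t)) * h p + (1 - t) * h (r + d) \<le> h r"
    using concave_onD[OF concave, of t p "r + d"] concave_onD[OF concave, of "1 - t" p "r + d"]
      t assms by auto
  then show ?thesis by (simp add: algebra_simps)
qed simp

lemma concave_mono_increment_le:
  fixes h :: "real \<Rightarrow> real"
  assumes concave: "concave_on {0..} h" and mono: "mono_on {0..} h"
    and "0 \<le> p" "p \<le> r" "r \<le> s" "s - r \<le> q - p"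
  shows "h s - h r \<le> h q - h p"
proof -
  have "h (r + (s - r)) - h r \<le> h (p + (s - r)) - h p"
    using assms by (intro concave_on_increment_antimono[OF concave]) auto
  also have "h (p + (s - r)) \<le> h q"
    using assms by (intro mono_onD[OF mono]) auto
  finally show ?thesis by simp
qed

lemma nest_index_mem: "j < n \<Longrightarrow> n - j \<in> {1..n::nat}"
  by auto

context
  fixes h :: "real \<Rightarrow> real" and a b :: "nat \<Rightarrow> real" and n :: nat
  assumes mono: "mono_on {0..} h"
    and nonneg: "\<And>x. 0 \<le> x \<Longrightarrow> 0 \<le> h x"
    and a_nonneg: "\<And>k. k \<in> {1..n} \<Longrightarrow> 0 \<le> a k"
begin

lemma nest_nonneg: "j \<le> n \<Longrightarrow> 0 \<le> x \<Longrightarrow> 0 \<le> nest h a n j x"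
  by (induction j) (auto intro!: nonneg add_nonneg_nonneg a_nonneg nest_index_mem)

lemma nest_mono_arg:
  assumes "j \<le> n" "0 \<le> x" "x \<le> y"
  shows "nest h a n j x \<le> nest h a n j y"
  using assms
proof (induction j)
  case (Suc j)
  have "0 \<le> a (n - j)" using Suc.prems by (intro a_nonneg nest_index_mem) simp
  with Suc nest_nonneg[of j x] show ?case
    by (auto intro!: mono_onD[OF mono])
qed simp

lemma nest_mono_seq:
  assumes a_le_b: "\<And>k. k \<in> {1..n} \<Longrightarrow> a k \<le> b k" and "j \<le> n" "0 \<le> x"
  shows "nest h a n j x \<le> nest h b n j x"
  using assms(2)
proof (induction j)
  case (Suc j)
  have k: "n - j \<in> {1..n}" using Suc.prems by (intro nest_index_mem) simp
  have "0 \<le> a (n - j) + nest h a n j x"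
    using a_nonneg[OF k] nest_nonneg[of j x] Suc.prems \<open>0 \<le> x\<close> by simp
  moreover have "a (n - j) + nest h a n j x \<le> b (n - j) + nest h b n j x"
    using a_le_b[OF k] Suc by simp
  ultimately show ?case
    by (auto intro!: mono_onD[OF mono])
qed simp

end

lemma nest_increment_antimono_seq:
  fixes h :: "real \<Rightarrow> real" and a b :: "nat \<Rightarrow> real"
  assumes concave: "concave_on {0..} h" and mono: "mono_on {0..} h"
    and nonneg: "\<And>x. 0 \<le> x \<Longrightarrow> 0 \<le> h x"
    and a_nonneg: "\<And>k. k \<in> {1..n} \<Longrightarrow> 0 \<le> a k"
    and a_le_b: "\<And>k. k \<in> {1..n} \<Longrightarrow> a k \<le> b k"
    and "j \<le> n" "0 \<le> l" "l \<le> u"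
  shows "nest h b n j u - nest h b n j l \<le> nest h a n j u - nest h a n j l"
  using \<open>j \<le> n\<close>
proof (induction j)
  case (Suc j)
  have k: "n - j \<in> {1..n}" using Suc.prems by (intro nest_index_mem) simp
  have b_nonneg: "\<And>k. k \<in> {1..n} \<Longrightarrow> 0 \<le> b k"
    using a_nonneg a_le_b by (meson order_trans)
  note nest_facts =
    nest_nonneg[where h = h and a = a and n = n and j = j and x = l, OF mono nonneg a_nonneg]
    nest_mono_arg[where h = h and a = b and n = n and j = j and x = l and y = u,
      OF mono nonneg b_nonneg]
    nest_mono_seq[where h = h and a = a and b = b and n = n and j = j and x = l,
      OF mono nonneg a_nonneg a_le_b]
  show ?case
    unfolding nest.simps
    using Suc nest_facts a_nonneg[OF k] a_le_b[OF k] \<open>0 \<le> l\<close> \<open>l \<le> u\<close>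
    by (intro concave_mono_increment_le[OF concave mono]) auto
qed simp

theorem lemma3:
  fixes h :: "real \<Rightarrow> real" and a b :: "nat \<Rightarrow> real" and n :: nat and u l :: real
  assumes "concave_on {0..} h"
    and "mono_on {0..} h"
    and "\<And>x. x \<ge> 0 \<Longrightarrow> h x \<ge> 0"
    and "n \<ge> 1"
    and "0 \<le> l" and "l < u"
    and "\<And>k. k \<in> {1..n} \<Longrightarrow> 0 \<le> a k"
    and "\<And>k. k \<in> {1..n} \<Longrightarrow> 0 \<le> b k"
    and "\<And>k. k \<in> {1..n} \<Longrightarrow> a k \<le> b k"
  shows "nest h a n n u - nest h a n n l \<ge> nest h b n n u - nest h b n n l"
  using nest_increment_antimono_seq[OF assms(1-3,7,9), where j = n and l = l and u = u] assms(5,6) by simp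

end
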